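(* For every $\alpha\in(0,1)$ and $\gamma\in(0,1)$, define for $\hat\beta>0$ the a.s. unique maximizer $\hat I_{\hat\beta,\infty}=\operatorname{argmax}_{I\in\mathrm{X}}\big(\hat\beta\hat\sigma_\infty(I)-\bar E(I)\big)$ and $\hat\beta_c=\inf\{\hat\beta>0:\hat I_{\hat\beta,\infty}\neq\{0,1\}\}$. Then $\hat\beta_c>0$ almost surely.
   Context: $\mathrm{X}$: closed subsets of $[0,1]$ containing $0$ and $1$, with Hausdorff metric $d_H$. For finite $I=\{0=x_0<x_1<\dots<x_\ell=1\}$, $E(I)=\sum_{i=1}^\ell(x_i-x_{i-1})^\gamma$; for $I\in\mathrm{X}$, $\bar E(I)=\sup_{\delta>0}\inf\{E(J): J\in\mathrm{X}\text{ finite},\,J\ne I,\,d_H(J,I)<\delta\}$. Continuum disorder: $T_i$ is a sum of $i$ i.i.d. exponentials of mean $1$, $M^{(\infty)}_i=T_i^{-1/\alpha}$, $(Y^{(\infty)}_i)$ i.i.d. Uniform$[0,1]$ independent of $(T_i)$, and $\hat\sigma_\infty(I)=\sum_{i\ge1}M^{(\infty)}_i\mathbf 1(Y^{(\infty)}_i\in I)$. Almost surely, for every $\hat\beta\in(0,\infty)$, the maximizer $\hat I_{\hat\beta,\infty}$ exists and is unique. *)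

theory Defs
  imports "HOL-Analysis.Analysis" "HOL-Probability.Probability"
begin

definition Xsp :: "real set set" where
  "Xsp = {I. closed I \<and> I \<subseteq> {0..1} \<and> 0 \<in> I \<and> 1 \<in> I}"

definition hdist :: "real set \<Rightarrow> real set \<Rightarrow> real" where
  "hdist A B = max (SUP a\<in>A. infdist a B) (SUP b\<in>B. infdist b A)"

definition energy :: "real \<Rightarrow> real set \<Rightarrow> real" where
  "energy \<gamma> J = (\<Sum>x\<in>J - {Max J}. (Min {y\<in>J. x < y} - x) powr \<gamma>)"

definition energy_bar :: "real \<Rightarrow> real set \<Rightarrow> ereal" where
  "energy_bar \<gamma> I = (SUP \<delta>\<in>{0<..}.
      INF J\<in>{J. J \<in> Xsp \<and> finite J \<and> J \<noteq> I \<and> hdist J I < \<delta>}. ereal (energy \<gamma> J))"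

text \<open>Continuum disorder. Z n is the (n+1)-th exponential, T_{n+1} = Z 0 + ... + Z n,
  M_{n+1} = T_{n+1} powr (-1/alpha), Y n the (n+1)-th uniform position.\<close>
definition sigma_inf :: "real \<Rightarrow> (nat \<Rightarrow> 'a \<Rightarrow> real) \<Rightarrow> (nat \<Rightarrow> 'a \<Rightarrow> real) \<Rightarrow> 'a \<Rightarrow> real set \<Rightarrow> real" where
  "sigma_inf \<alpha> Z Y \<omega> I = (\<Sum>n. (\<Sum>j\<le>n. Z j \<omega>) powr (-1/\<alpha>) * indicator I (Y n \<omega>))"

definition objective :: "real \<Rightarrow> real \<Rightarrow> (nat \<Rightarrow> 'a \<Rightarrow> real) \<Rightarrow> (nat \<Rightarrow> 'a \<Rightarrow> real) \<Rightarrow> 'a \<Rightarrow> real \<Rightarrow> real set \<Rightarrow> ereal" where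
  "objective \<alpha> \<gamma> Z Y \<omega> \<beta> I = ereal (\<beta> * sigma_inf \<alpha> Z Y \<omega> I) - energy_bar \<gamma> I"

definition maximizer :: "real \<Rightarrow> real \<Rightarrow> (nat \<Rightarrow> 'a \<Rightarrow> real) \<Rightarrow> (nat \<Rightarrow> 'a \<Rightarrow> real) \<Rightarrow> 'a \<Rightarrow> real \<Rightarrow> real set" where
  "maximizer \<alpha> \<gamma> Z Y \<omega> \<beta> = (THE I. I \<in> Xsp \<and>
      (\<forall>J\<in>Xsp. objective \<alpha> \<gamma> Z Y \<omega> \<beta> J \<le> objective \<alpha> \<gamma> Z Y \<omega> \<beta> I))"

definition beta_crit :: "real \<Rightarrow> real \<Rightarrow> (nat \<Rightarrow> 'a \<Rightarrow> real) \<Rightarrow> (nat \<Rightarrow> 'a \<Rightarrow> real) \<Rightarrow> 'a \<Rightarrow> ereal" where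
  "beta_crit \<alpha> \<gamma> Z Y \<omega> = Inf {ereal \<beta> | \<beta>. 0 < \<beta> \<and> maximizer \<alpha> \<gamma> Z Y \<omega> \<beta> \<noteq> {0, 1}}"

end

theory Submission
  imports Defs
begin

(*
  Write dist_b x = min x (1 - x) (boundary_dist below) for the distance of x
  to the boundary {0,1}.
  (1) Energy gap: every finite J in X containing a point z satisfies
      E(J) >= z^g + (1-z)^g >= 1 + c * dist_b z ^ g  with  c = 1 - 2^(g-1) > 0,
      so the relaxed energy of any I in X other than {0,1} exceeds 1 by a fixed amount
      depending on the point of I farthest from the boundary, while Ebar({0,1}) <= 1.
  (2) Disorder bound: sigma(I) <= W * (max_{x in I} dist_b x)^g, where
      W = sum_n M_n * dist_b(Y_n)^(-g).  Hence if W < infinity, then for beta small the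
      energy gap beats beta * sigma(I) for every nontrivial I, the maximizer is {0,1},
      and beta_c > 0.  This is a purely deterministic criterion.
  (3) Almost surely W < infinity: dist_b(Y)^(-g) is integrable for uniform Y, so
      sum_n n^(-1/alpha) dist_b(Y_n)^(-g) has finite expectation; and T_n >= n/2
      eventually (Chernoff bound for Erlang sums + Borel-Cantelli), so M_n <= C n^(-1/alpha).
*)

section \<open>Elementary inequalities\<close>

definition boundary_dist :: "real \<Rightarrow> real" where
  "boundary_dist y = min y (1 - y)"

lemma boundary_dist_measurable [measurable]: "boundary_dist \<in> borel_measurable borel"
  unfolding boundary_dist_def by measurable

lemma powr_ge_self:
  fixes x g :: real
  assumes "0 \<le> x" "x \<le> 1" "0 < g" "g \<le> 1"
  shows "x \<le> x powr g"
proof (cases "x = 0")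
  case False
  then have "x powr 1 \<le> x powr g" using assms by (intro powr_mono') auto
  then show ?thesis using assms by simp
qed simp

text \<open>Subadditivity of t \<mapsto> t powr g for 0 < g \<le> 1; it makes refining a partition costly.\<close>
lemma powr_subadd:
  fixes u v g :: real
  assumes "0 \<le> u" "0 \<le> v" "0 < g" "g \<le> 1"
  shows "(u + v) powr g \<le> u powr g + v powr g"
proof (cases "u + v = 0")
  case True then show ?thesis using assms by simp
next
  case False
  then have s: "0 < u + v" using assms by linarith
  have "u/(u+v) \<le> (u/(u+v)) powr g" "v/(u+v) \<le> (v/(u+v)) powr g"
    using assms s by (intro powr_ge_self; simp)+
  moreover have "u/(u+v) + v/(u+v) = 1" using s by (simp add: add_divide_distrib[symmetric])
  ultimately have "1 \<le> (u/(u+v)) powr g + (v/(u+v)) powr g" by linarith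
  also have "\<dots> = (u powr g + v powr g) / (u+v) powr g"
    using assms s by (simp add: powr_divide add_divide_distrib)
  finally show ?thesis using s by (simp add: le_divide_eq)
qed

text \<open>The constant c = 1 - 2^(g-1) of the energy gap; it is positive for g < 1.\<close>
definition gap_const :: "real \<Rightarrow> real" where
  "gap_const g = 1 - (1/2) powr (1 - g)"

lemma gap_const_pos: assumes "g < 1" shows "0 < gap_const g"
proof -
  have "(1/2::real) powr (1-g) < 1 powr (1-g)" using assms by (intro powr_less_mono2) auto
  then show ?thesis by (simp add: gap_const_def)
qed

lemma split_gain_half:
  fixes y g :: real
  assumes "0 \<le> y" "y \<le> 1/2" "0 < g" "g < 1"
  shows "1 + gap_const g * y powr g \<le> y powr g + (1 - y) powr g"
proof -
  have a: "1 - y \<le> (1 - y) powr g" using assms by (intro powr_ge_self) auto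
  have b: "y \<le> y powr g * (1/2) powr (1-g)"
  proof (cases "y = 0")
    case False
    have "y = y powr g * y powr (1-g)" using False assms by (simp add: powr_add[symmetric])
    also have "\<dots> \<le> y powr g * (1/2) powr (1-g)"
      using assms by (intro mult_left_mono powr_mono2) auto
    finally show ?thesis .
  qed simp
  show ?thesis using a b by (simp add: gap_const_def algebra_simps)
qed

lemma split_gain:
  fixes y g :: real
  assumes "0 \<le> y" "y \<le> 1" "0 < g" "g < 1"
  shows "1 + gap_const g * boundary_dist y powr g \<le> y powr g + (1 - y) powr g"
proof (cases "y \<le> 1/2")
  case True
  then show ?thesis using split_gain_half[of y g] assms by (simp add: boundary_dist_def)
next
  case False
  then have "boundary_dist y = 1 - y" by (simp add: boundary_dist_def)
  then show ?thesis using split_gain_half[of "1 - y" g] assms False by simp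
qed

section \<open>Energy of finite configurations\<close>

lemma Xsp_Min_Max:
  assumes "J \<in> Xsp" "finite J"
  shows "Min J = 0" "Max J = 1"
proof -
  have J: "J \<subseteq> {0..1}" "0 \<in> J" "1 \<in> J" using assms by (auto simp: Xsp_def)
  show "Min J = 0" using J assms(2) by (intro Min_eqI) auto
  show "Max J = 1" using J assms(2) by (intro Max_eqI) auto
qed

lemma energy_remove_Max:
  fixes J :: "real set"
  assumes fin: "finite J" and ne: "J - {Max J} \<noteq> {}"
  shows "energy g J = energy g (J - {Max J}) + (Max J - Max (J - {Max J})) powr g"
proof -
  define b where "b = Max J"
  define J' where "J' = J - {b}"
  define m where "m = Max J'"
  have finJ': "finite J'" using fin by (simp add: J'_def)
  have neJ': "J' \<noteq> {}" using ne by (simp add: J'_def b_def)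
  have bJ: "b \<in> J" using fin ne unfolding b_def by (intro Max_in) auto
  have mJ': "m \<in> J'" using finJ' neJ' by (simp add: m_def)
  have lem: "y \<le> m" if "y \<in> J'" for y using that finJ' by (simp add: m_def)
  have mb: "m < b" using mJ' fin by (auto simp: J'_def b_def order_le_neq_trans)
  have next_m: "Min {y\<in>J. m < y} = b"
  proof -
    have "{y\<in>J. m < y} = {b}" using bJ mb lem by (force simp: J'_def)
    then show ?thesis by simp
  qed
  have next_x: "Min {y\<in>J. x < y} = Min {y\<in>J'. x < y}" if x: "x \<in> J' - {m}" for x
  proof -
    have xm: "x < m" using x lem[of x] by auto
    have eq: "{y\<in>J. x < y} = insert b {y\<in>J'. x < y}"
      using bJ xm mb by (auto simp: J'_def)
    have S: "finite {y\<in>J'. x < y}" "{y\<in>J'. x < y} \<noteq> {}" using finJ' mJ' xm by auto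
    have "Min {y\<in>J'. x < y} \<le> m" using S mJ' xm by (intro Min_le) auto
    then show ?thesis unfolding eq using S mb by (simp add: Min_insert)
  qed
  have J'eq: "J' = insert m (J' - {m})" using mJ' by auto
  have "energy g J = (\<Sum>x\<in>J'. (Min {y\<in>J. x < y} - x) powr g)"
    by (simp add: energy_def J'_def b_def)
  also have "\<dots> = (Min {y\<in>J. m < y} - m) powr g + (\<Sum>x\<in>J' - {m}. (Min {y\<in>J. x < y} - x) powr g)"
    using finJ' mJ' by (subst J'eq) (simp add: sum.insert_remove)
  also have "(\<Sum>x\<in>J' - {m}. (Min {y\<in>J. x < y} - x) powr g) = energy g J'"
    unfolding energy_def m_def[symmetric] using next_x by (intro sum.cong) auto
  finally show ?thesis using next_m by (simp add: J'_def b_def m_def)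
qed

text \<open>By subadditivity, the energy of J dominates the energy of the coarsening
  {Min J, y, Max J} for any y in J.  Induction on the number of points.\<close>
lemma energy_ge_coarsening:
  fixes J :: "real set"
  assumes "finite J" "y \<in> J" "0 < g" "g \<le> 1"
  shows "(y - Min J) powr g + (Max J - y) powr g \<le> energy g J"
  using assms(1,2)
proof (induction "card J" arbitrary: J y rule: less_induct)
  case less
  note fin = less.prems(1) and yJ = less.prems(2)
  define b where "b = Max J"
  define J' where "J' = J - {b}"
  have bJ: "b \<in> J" using fin yJ unfolding b_def by (intro Max_in) auto
  have leb: "z \<le> b" if "z \<in> J" for z using that fin by (simp add: b_def)
  show ?case
  proof (cases "J' = {}")
    case True
    then have "J = {b}" using bJ by (auto simp: J'_def)
    then show ?thesis using yJ by (simp add: energy_def)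
  next
    case False
    define m where "m = Max J'"
    have finJ': "finite J'" using fin by (simp add: J'_def)
    have mJ': "m \<in> J'" using finJ' False by (simp add: m_def)
    have mb: "m < b" using mJ' leb[of m] by (auto simp: J'_def)
    have card: "card J' < card J" using fin bJ unfolding J'_def by (meson card_Diff1_less)
    have minJ: "Min J \<in> J" using fin yJ by (intro Min_in) auto
    have "Min J \<le> m" using fin mJ' by (auto simp: J'_def)
    then have "Min J \<in> J'" using minJ mb by (auto simp: J'_def)
    then have min_eq: "Min J' = Min J"
    proof (intro antisym)
      show "Min J' \<le> Min J" using finJ' \<open>Min J \<in> J'\<close> by simp
      show "Min J \<le> Min J'" using fin finJ' False by (simp add: J'_def)
    qed
    have step: "energy g J = energy g J' + (b - m) powr g"
      using energy_remove_Max[OF fin] False by (simp add: J'_def b_def m_def)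
    (* apply the induction hypothesis at y, or at m when y is the removed maximum *)
    define y' where "y' = (if y = b then m else y)"
    have y'J': "y' \<in> J'" using yJ mJ' by (auto simp: y'_def J'_def)
    have IH: "(y' - Min J') powr g + (Max J' - y') powr g \<le> energy g J'"
      using less.hyps[OF _ finJ' y'J'] card by simp
    have y'm: "Min J \<le> y'" "y' \<le> m" using y'J' finJ' min_eq[symmetric] by (simp_all add: m_def)
    show ?thesis
    proof (cases "y = b")
      case True
      have "(b - Min J) powr g \<le> (m - Min J) powr g + (b - m) powr g"
        using powr_subadd[of "m - Min J" "b - m" g] \<open>Min J \<le> m\<close> mb assms by simp
      then show ?thesis using IH step True min_eq by (simp add: y'_def m_def b_def)
    next
      case False
      have "(b - y') powr g \<le> (m - y') powr g + (b - m) powr g"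
        using powr_subadd[of "m - y'" "b - m" g] y'm mb assms by simp
      then show ?thesis using IH step False min_eq by (simp add: y'_def m_def b_def)
    qed
  qed
qed

lemma energy_gap_finite:
  assumes "J \<in> Xsp" "finite J" "z \<in> J" "0 < g" "g < 1"
  shows "1 + gap_const g * boundary_dist z powr g \<le> energy g J"
proof -
  have "z \<in> {0..1}" using assms by (auto simp: Xsp_def)
  then have "1 + gap_const g * boundary_dist z powr g \<le> z powr g + (1 - z) powr g"
    using assms by (intro split_gain) auto
  also have "\<dots> \<le> energy g J"
    using energy_ge_coarsening[of J z g] assms Xsp_Min_Max[OF assms(1,2)] by simp
  finally show ?thesis .
qed

lemma energy_three_points:
  fixes t g :: real
  assumes "0 < t" "t < 1"
  shows "energy g {0, t, 1} = t powr g + (1 - t) powr g"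
proof -
  define S where "S = {0, t, 1::real}"
  have mx: "Max S = 1" using assms unfolding S_def by (intro Max_eqI) auto
  have e: "S - {1} = {0, t}" using assms unfolding S_def by auto
  have s1: "{y \<in> S. 0 < y} = {t, 1}" using assms unfolding S_def by auto
  have s2: "{y \<in> S. t < y} = {1}" using assms unfolding S_def by auto
  have m1: "Min {t, 1::real} = t" using assms by (intro Min_eqI) auto
  have "energy g S = (\<Sum>x\<in>{0,t}. (Min {y\<in>S. x < y} - x) powr g)"
    unfolding energy_def mx e ..
  also have "\<dots> = (Min {y\<in>S. 0 < y} - 0) powr g + (Min {y\<in>S. t < y} - t) powr g"
    using assms by (subst sum.insert) auto
  also have "\<dots> = t powr g + (1 - t) powr g" unfolding s1 s2 m1 by simp
  finally show ?thesis unfolding S_def .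
qed

section \<open>The relaxed energy\<close>

lemma infdist_le_hdist:
  assumes "J \<in> Xsp" "I \<in> Xsp" "x \<in> I"
  shows "infdist x J \<le> hdist J I"
proof -
  have J0: "0 \<in> J" using assms by (auto simp: Xsp_def)
  have "bdd_above ((\<lambda>b. infdist b J) ` I)"
  proof (rule bdd_aboveI2)
    fix b assume "b \<in> I"
    then have "b \<in> {0..1}" using assms by (auto simp: Xsp_def)
    then show "infdist b J \<le> 1" using infdist_le[OF J0, of b] by (auto simp: dist_real_def)
  qed
  then have "infdist x J \<le> (SUP b\<in>I. infdist b J)" using assms by (intro cSUP_upper) auto
  then show ?thesis unfolding hdist_def by linarith
qed

lemma hdist_three_points:
  fixes t :: real
  assumes "0 < t" "t < 1"
  shows "hdist {0, t, 1} {0, 1} \<le> t"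
proof -
  have near: "infdist a S \<le> t" if "a \<in> {0, t, 1}" "{0, 1} \<subseteq> S" for a S
    using that assms infdist_le[of 0 S a] infdist_le[of 1 S a] by (auto simp: dist_real_def)
  have "(SUP a\<in>{0, t, 1}. infdist a {0, 1}) \<le> t" "(SUP a\<in>{0, 1}. infdist a {0, t, 1}) \<le> t"
    by (intro cSUP_least; use near assms in auto)+
  then show ?thesis unfolding hdist_def by simp
qed

text \<open>Energy gap for the relaxed energy: an interior point x of I forces
  Ebar(I) \<ge> 1 + c (dist_b(x)/2)^g, since finite approximants have a point near x.\<close>
lemma energy_bar_gap:
  assumes "I \<in> Xsp" "x \<in> I" "0 < x" "x < 1" "0 < g" "g < 1"
  shows "ereal (1 + gap_const g * (boundary_dist x / 2) powr g) \<le> energy_bar g I"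
proof -
  define c where "c = gap_const g"
  have c0: "0 \<le> c" using gap_const_pos assms by (simp add: c_def less_imp_le)
  define \<delta> where "\<delta> = boundary_dist x / 2"
  have d0: "0 < \<delta>" using assms by (simp add: \<delta>_def boundary_dist_def)
  have "ereal (1 + c * \<delta> powr g) \<le>
      (INF J\<in>{J. J \<in> Xsp \<and> finite J \<and> J \<noteq> I \<and> hdist J I < \<delta>}. ereal (energy g J))"
  proof (rule INF_greatest)
    fix J assume J: "J \<in> {J. J \<in> Xsp \<and> finite J \<and> J \<noteq> I \<and> hdist J I < \<delta>}"
    then have JX: "J \<in> Xsp" "finite J" by auto
    have "infdist x J < \<delta>" using infdist_le_hdist[OF JX(1) assms(1,2)] J by auto
    moreover have "J \<noteq> {}" "closed J" using JX by (auto simp: Xsp_def)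
    ultimately obtain z where z: "z \<in> J" "dist x z < \<delta>"
      using infdist_attains_inf[of J x] by metis
    have "\<delta> \<le> boundary_dist z"
      using z(2) unfolding \<delta>_def boundary_dist_def dist_real_def
      by (auto simp: min_def abs_if split: if_splits)
    then have "1 + c * \<delta> powr g \<le> 1 + c * boundary_dist z powr g"
      using d0 c0 assms by (simp add: mult_left_mono powr_mono2)
    also have "\<dots> \<le> energy g J" unfolding c_def using energy_gap_finite[OF JX z(1)] assms by simp
    finally show "ereal (1 + c * \<delta> powr g) \<le> ereal (energy g J)" by simp
  qed
  also have "\<dots> \<le> energy_bar g I" unfolding energy_bar_def using d0 by (intro SUP_upper) auto
  finally show ?thesis by (simp add: c_def \<delta>_def)
qed

text \<open>The trivial configuration has relaxed energy at most 1: approximate it by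
  {0, t, 1} with t small, whose energy t^g + (1-t)^g is close to 1.\<close>
lemma energy_bar_trivial:
  assumes "0 < g"
  shows "energy_bar g {0, 1} \<le> 1"
  unfolding energy_bar_def
proof (rule SUP_least)
  fix \<delta> :: real assume "\<delta> \<in> {0<..}"
  then have d: "0 < \<delta>" by simp
  define A where "A = {J. J \<in> Xsp \<and> finite J \<and> J \<noteq> {0, 1} \<and> hdist J {0, 1} < \<delta>}"
  show "(INF J\<in>A. ereal (energy g J)) \<le> 1" unfolding A_def[symmetric]
  proof (rule ereal_le_epsilon2)
    fix e :: real assume e: "0 < e"
    define t where "t = min (\<delta>/2) (min (1/2) (e powr (1/g)))"
    have t0: "0 < t" "t < \<delta>" "t \<le> 1/2" using d e by (auto simp: t_def)
    have "t powr g \<le> (e powr (1/g)) powr g" using t0 e assms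
      by (intro powr_mono2) (auto simp: t_def)
    also have "\<dots> = e" using assms e by (simp add: powr_powr)
    finally have te: "t powr g \<le> e" .
    have "(1 - t) powr g \<le> 1" using t0 assms by (intro powr_le1) auto
    have "t \<notin> {0, 1::real}" using t0 by auto
    then have "{0, t, 1} \<noteq> {0, 1::real}" by blast
    then have "{0, t, 1} \<in> A" using t0 hdist_three_points[of t] by (auto simp: A_def Xsp_def)
    then have "(INF J\<in>A. ereal (energy g J)) \<le> ereal (energy g {0, t, 1})" by (rule INF_lower)
    also have "energy g {0, t, 1} = t powr g + (1 - t) powr g"
      using t0 by (intro energy_three_points) auto
    also have "ereal (t powr g + (1 - t) powr g) \<le> 1 + ereal e"
      using te \<open>(1 - t) powr g \<le> 1\<close> by simp
    finally show "(INF J\<in>A. ereal (energy g J)) \<le> 1 + ereal e" .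
  qed
qed

section \<open>A deterministic criterion for a positive critical point\<close>

lemma farthest_point:
  assumes "I \<in> Xsp" "I \<noteq> {0, 1}"
  obtains x where "x \<in> I" "0 < x" "x < 1"
    "\<And>z. z \<in> I \<Longrightarrow> boundary_dist z \<le> boundary_dist x"
proof -
  have Isub: "I \<subseteq> {0..1}" "closed I" "0 \<in> I" "1 \<in> I" using assms by (auto simp: Xsp_def)
  have "compact I" using Isub by (meson bounded_closed_interval bounded_subset compact_eq_bounded_closed)
  moreover have "continuous_on I boundary_dist" unfolding boundary_dist_def by (intro continuous_intros)
  ultimately obtain x where xI: "x \<in> I"
    and xmax: "\<And>z. z \<in> I \<Longrightarrow> boundary_dist z \<le> boundary_dist x"
    using continuous_attains_sup[of I boundary_dist] Isub by blast
  obtain z where z: "z \<in> I" "z \<notin> {0, 1}" using assms Isub by blast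
  then have "0 < boundary_dist z" using Isub by (auto simp: boundary_dist_def)
  then have "0 < boundary_dist x" using xmax[OF z(1)] by simp
  then have "0 < x" "x < 1" by (auto simp: boundary_dist_def)
  then show ?thesis using that xI xmax by blast
qed

lemma weight_in_set_le:
  fixes m y :: "nat \<Rightarrow> real"
  assumes m0: "\<And>n. 0 \<le> m n" and y01: "\<And>n. y n \<in> {0<..<1}"
    and summ: "summable (\<lambda>n. m n * boundary_dist (y n) powr (-g))"
    and g: "0 < g" and d: "0 < d" and near: "\<And>z. z \<in> I \<Longrightarrow> boundary_dist z \<le> d"
  shows "(\<Sum>n. m n * indicator I (y n)) \<le> (\<Sum>n. m n * boundary_dist (y n) powr (-g)) * d powr g"
proof -
  have term_le: "m n * indicator I (y n) \<le> m n * boundary_dist (y n) powr (-g) * d powr g" for n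
  proof (cases "y n \<in> I")
    case True
    have dy: "0 < boundary_dist (y n)" using y01[of n] by (simp add: boundary_dist_def)
    have "boundary_dist (y n) powr g \<le> d powr g" using near[OF True] dy g by (intro powr_mono2) auto
    then have "1 \<le> boundary_dist (y n) powr (-g) * d powr g" using dy
      by (simp add: powr_minus field_simps)
    then show ?thesis using True m0[of n] by (simp add: mult.assoc mult_le_cancel_left1)
  qed (use m0[of n] in simp)
  have sR: "summable (\<lambda>n. m n * boundary_dist (y n) powr (-g) * d powr g)"
    using summ by (rule summable_mult2)
  have sL: "summable (\<lambda>n. m n * indicator I (y n))"
    by (rule summable_comparison_test[OF _ sR]) (use term_le m0 in \<open>auto simp: indicator_def\<close>)
  show ?thesis using suminf_le[OF term_le sL sR] suminf_mult2[OF summ, of "d powr g"] by simp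
qed

lemma maximizer_eqI:
  assumes "I0 \<in> Xsp"
    and "\<And>I. I \<in> Xsp \<Longrightarrow> I \<noteq> I0 \<Longrightarrow> objective \<alpha> g Z Y \<omega> \<beta> I < objective \<alpha> g Z Y \<omega> \<beta> I0"
  shows "maximizer \<alpha> g Z Y \<omega> \<beta> = I0"
  unfolding maximizer_def
proof (rule the_equality)
  show "I0 \<in> Xsp \<and> (\<forall>J\<in>Xsp. objective \<alpha> g Z Y \<omega> \<beta> J \<le> objective \<alpha> g Z Y \<omega> \<beta> I0)"
    using assms by (metis order.strict_implies_order order.refl)
qed (use assms in \<open>meson leD\<close>)

text \<open>Deterministic criterion: if all atoms are interior and the boundary-weighted
  disorder W is finite, then below beta_0 = c 2^(-g) / (W + 1) the maximizer is {0,1}.\<close>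
lemma beta_crit_pos_if_summable:
  fixes Z Y :: "nat \<Rightarrow> 'a \<Rightarrow> real" and \<omega> :: 'a and \<alpha> g :: real
  assumes g: "0 < g" "g < 1"
    and Y01: "\<And>n. Y n \<omega> \<in> {0<..<1}"
    and summ: "summable (\<lambda>n. (\<Sum>j\<le>n. Z j \<omega>) powr (-1/\<alpha>) * boundary_dist (Y n \<omega>) powr (-g))"
  shows "0 < beta_crit \<alpha> g Z Y \<omega>"
proof -
  define m where "m n = (\<Sum>j\<le>n. Z j \<omega>) powr (-1/\<alpha>)" for n
  define W where "W = (\<Sum>n. m n * boundary_dist (Y n \<omega>) powr (-g))"
  have W0: "0 \<le> W" unfolding W_def using summ by (intro suminf_nonneg) (auto simp: m_def)
  define c where "c = gap_const g * (1/2) powr g"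
  have c0: "0 < c" using gap_const_pos[OF g(2)] by (simp add: c_def)
  define \<beta>0 where "\<beta>0 = c / (W + 1)"
  have \<beta>0: "0 < \<beta>0" using c0 W0 by (simp add: \<beta>0_def)
  have sigma: "sigma_inf \<alpha> Z Y \<omega> I = (\<Sum>n. m n * indicator I (Y n \<omega>))" for I
    by (simp add: sigma_inf_def m_def)
  have trivial: "maximizer \<alpha> g Z Y \<omega> \<beta> = {0, 1}" if b: "0 < \<beta>" "\<beta> < \<beta>0" for \<beta>
  proof (rule maximizer_eqI)
    have "\<beta> * (W + 1) < c" using b W0 by (simp add: \<beta>0_def pos_less_divide_eq)
    then have bW: "\<beta> * W < c" using b(1) by (simp add: algebra_simps)
    have "sigma_inf \<alpha> Z Y \<omega> {0, 1} = 0" unfolding sigma using Y01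
      by (simp add: indicator_def less_le)
    then have obj01: "-1 \<le> objective \<alpha> g Z Y \<omega> \<beta> {0, 1}"
      using energy_bar_trivial[OF g(1)] unfolding objective_def
      by (cases "energy_bar g {0, 1}") (auto simp: one_ereal_def)
    fix I assume I: "I \<in> Xsp" "I \<noteq> {0, 1}"
    obtain x where x: "x \<in> I" "0 < x" "x < 1"
      and far: "\<And>z. z \<in> I \<Longrightarrow> boundary_dist z \<le> boundary_dist x"
      using farthest_point[OF I] by blast
    define D where "D = boundary_dist x powr g"
    have D0: "0 < D" using x by (simp add: D_def boundary_dist_def)
    have "sigma_inf \<alpha> Z Y \<omega> I \<le> W * D" unfolding sigma W_def D_def
      using x Y01 summ g far by (intro weight_in_set_le) (auto simp: m_def boundary_dist_def)
    then have "\<beta> * sigma_inf \<alpha> Z Y \<omega> I \<le> \<beta> * W * D" using b by (simp add: mult.assoc)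
    also have "\<dots> < c * D" using bW D0 by simp
    finally have lt: "\<beta> * sigma_inf \<alpha> Z Y \<omega> I + 1 < 1 + c * D" by simp
    have "(boundary_dist x / 2) powr g = (1/2) powr g * D"
      using x by (simp add: D_def powr_mult[symmetric] boundary_dist_def)
    then have "ereal (1 + c * D) \<le> energy_bar g I"
      using energy_bar_gap[OF I(1) x g] by (simp add: c_def mult.assoc)
    then have "objective \<alpha> g Z Y \<omega> \<beta> I < -1" unfolding objective_def using lt
      by (cases "energy_bar g I") (auto simp: one_ereal_def)
    then show "objective \<alpha> g Z Y \<omega> \<beta> I < objective \<alpha> g Z Y \<omega> \<beta> {0, 1}" using obj01 by simp
  qed (simp add: Xsp_def)
  have "ereal \<beta>0 \<le> beta_crit \<alpha> g Z Y \<omega>"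
    unfolding beta_crit_def by (rule Inf_greatest) (use trivial in force)
  then show ?thesis using \<beta>0 by (meson ereal_less(2) order.strict_trans2)
qed

text \<open>Comparison of the disorder weights with a deterministic power sequence: if
  T_n > (n+1)/2 eventually, then T_n^(-1/alpha) \<le> 2^(1/alpha) (n+1)^(-1/alpha).\<close>
lemma summable_disorder_weights:
  fixes T w :: "nat \<Rightarrow> real" and \<alpha> :: real
  assumes \<alpha>: "0 < \<alpha>" and w0: "\<And>n. 0 \<le> w n"
    and large: "eventually (\<lambda>n. (real n + 1)/2 < T n) sequentially"
    and summ: "summable (\<lambda>n. (real n + 1) powr (-1/\<alpha>) * w n)"
  shows "summable (\<lambda>n. T n powr (-1/\<alpha>) * w n)"
proof (rule summable_comparison_test_ev)
  show "summable (\<lambda>n. 2 powr (1/\<alpha>) * ((real n + 1) powr (-1/\<alpha>) * w n))"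
    using summ by (rule summable_mult)
  show "eventually (\<lambda>n. norm (T n powr (-1/\<alpha>) * w n)
      \<le> 2 powr (1/\<alpha>) * ((real n + 1) powr (-1/\<alpha>) * w n)) sequentially"
    using large
  proof eventually_elim
    case (elim n)
    have h: "0 < (real n + 1)/2" by simp
    have "T n powr (-1/\<alpha>) \<le> ((real n + 1)/2) powr (-1/\<alpha>)"
      using elim h \<alpha> by (intro powr_mono2') auto
    also have "\<dots> = 2 powr (1/\<alpha>) * (real n + 1) powr (-1/\<alpha>)"
      using h by (simp add: powr_divide powr_minus divide_simps)
    finally have "T n powr (-1/\<alpha>) * w n \<le> 2 powr (1/\<alpha>) * (real n + 1) powr (-1/\<alpha>) * w n"
      using w0[of n] by (rule mult_right_mono)
    then show ?case using w0[of n] by (simp add: mult.assoc)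
  qed
qed

section \<open>Probabilistic inputs\<close>

lemma (in prob_space) indep_sets_reindex:
  assumes ind: "indep_sets F (f ` I)" and inj: "inj_on f I"
  shows "indep_sets (\<lambda>i. F (f i)) I"
  unfolding indep_sets_def
proof (intro conjI ballI allI impI)
  fix i assume "i \<in> I" then show "F (f i) \<subseteq> events" using ind by (auto simp: indep_sets_def)
next
  fix J A assume J: "J \<subseteq> I" "J \<noteq> {}" "finite J" and A: "A \<in> (\<Pi> j\<in>J. F (f j))"
  define A' where "A' k = A (the_inv_into J f k)" for k
  have inJ: "inj_on f J" using inj J by (meson inj_on_subset)
  have A'f: "A' (f j) = A j" if "j \<in> J" for j using that inJ by (simp add: A'_def the_inv_into_f_f)
  have "A' \<in> (\<Pi> k\<in>f ` J. F k)" using A A'f by auto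
  then have "prob (\<Inter>k\<in>f ` J. A' k) = (\<Prod>k\<in>f ` J. prob (A' k))"
    using ind J unfolding indep_sets_def by (metis finite_imageI image_is_empty image_mono)
  moreover have "(\<Inter>k\<in>f ` J. A' k) = (\<Inter>j\<in>J. A j)" using A'f by auto
  moreover have "(\<Prod>k\<in>f ` J. prob (A' k)) = (\<Prod>j\<in>J. prob (A j))"
    using inJ A'f by (simp add: prod.reindex)
  ultimately show "prob (\<Inter>j\<in>J. A j) = (\<Prod>j\<in>J. prob (A j))" by simp
qed

lemma (in prob_space) indep_vars_Inl:
  assumes "indep_vars (\<lambda>_. N) (case_sum X Y) UNIV"
  shows "indep_vars (\<lambda>_. N) X UNIV"
proof -
  have rv: "\<forall>i. random_variable N (case_sum X Y i)" using assms by (simp add: indep_vars_def2)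
  have "indep_sets (\<lambda>k. {case_sum X Y k -` A \<inter> space M | A. A \<in> sets N}) (range Inl)"
    using assms unfolding indep_vars_def2 by (auto intro: indep_sets_mono_index)
  then have "indep_sets (\<lambda>i. {case_sum X Y (Inl i) -` A \<inter> space M | A. A \<in> sets N}) UNIV"
    by (rule indep_sets_reindex) simp
  moreover have "\<forall>i. random_variable N (X i)" using rv[rule_format, of "Inl i" for i] by simp
  ultimately show ?thesis by (simp add: indep_vars_def2)
qed

lemma (in prob_space) erlang_laplace_1:
  assumes TD: "distributed M lborel T (erlang_density n 1)"
  shows "(\<integral>\<^sup>+\<omega>. ennreal (exp (- T \<omega>)) \<partial>M) = ennreal (1 / 2^(n+1))"
proof -
  have dens: "ennreal (erlang_density n 1 x) * ennreal (exp (- x))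
      = ennreal (1 / 2^(n+1)) * ennreal (erlang_density n 2 x * x ^ 0)" for x
  proof -
    have "exp (- (2 * x)) = exp (-x) * exp (-x)" by (simp add: exp_add[symmetric])
    then have "erlang_density n 1 x * exp (- x) = 1 / 2^(n+1) * (erlang_density n 2 x * x ^ 0)"
      by (cases "x < 0") (simp_all add: erlang_density_def field_simps)
    then show ?thesis by (simp add: ennreal_mult[symmetric] erlang_density_def)
  qed
  have "(\<integral>\<^sup>+\<omega>. ennreal (exp (- T \<omega>)) \<partial>M)
      = (\<integral>\<^sup>+x. ennreal (erlang_density n 1 x) * ennreal (exp (- x)) \<partial>lborel)"
    using distributed_nn_integral[OF TD, of "\<lambda>x. ennreal (exp (- x))"] by simp
  also have "\<dots> = ennreal (1 / 2^(n+1)) * (\<integral>\<^sup>+x. ennreal (erlang_density n 2 x * x ^ 0) \<partial>lborel)"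
    unfolding dens by (rule nn_integral_cmult) simp
  also have "(\<integral>\<^sup>+x. ennreal (erlang_density n 2 x * x ^ 0) \<partial>lborel) = 1"
    using nn_integral_erlang_ith_moment[of 2 n 0] by simp
  finally show ?thesis by simp
qed

text \<open>Chernoff bound: P(T_{n+1} \<le> (n+1)/2) \<le> (e^(1/2)/2)^(n+1), a geometric sequence.\<close>
lemma (in prob_space) partial_sum_small:
  assumes Zd: "\<And>n. distributed M lborel (Z n) (exponential_density 1)"
    and indZ: "indep_vars (\<lambda>_. borel) Z UNIV"
  shows "emeasure M {\<omega>\<in>space M. (\<Sum>j\<le>n. Z j \<omega>) \<le> (real n + 1)/2} \<le> ennreal ((exp (1/2) / 2)^(n+1))"
proof -
  define T where "T \<omega> = (\<Sum>j\<le>n. Z j \<omega>)" for \<omega>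
  define a where "a = (real n + 1)/2"
  have TD: "distributed M lborel T (erlang_density n 1)"
    using exponential_distributed_sum[of "{..n}" 1 Z] Zd indep_vars_subset[OF indZ]
    unfolding T_def by auto
  have Tm[measurable]: "T \<in> borel_measurable M" using distributed_measurable[OF TD] by simp
  have "emeasure M {\<omega>\<in>space M. T \<omega> \<le> a} = (\<integral>\<^sup>+\<omega>. indicator {\<omega>\<in>space M. T \<omega> \<le> a} \<omega> \<partial>M)"
    by (simp add: nn_integral_indicator)
  also have "\<dots> \<le> (\<integral>\<^sup>+\<omega>. ennreal (exp a) * ennreal (exp (- T \<omega>)) \<partial>M)"
  proof (rule nn_integral_mono)
    fix \<omega>
    have "T \<omega> \<le> a \<Longrightarrow> 1 \<le> exp a * exp (- T \<omega>)" by (simp add: exp_add[symmetric])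
    then show "indicator {\<omega>\<in>space M. T \<omega> \<le> a} \<omega> \<le> ennreal (exp a) * ennreal (exp (- T \<omega>))"
      by (auto simp: ennreal_mult[symmetric] indicator_def)
  qed
  also have "\<dots> = ennreal (exp a) * (\<integral>\<^sup>+\<omega>. ennreal (exp (- T \<omega>)) \<partial>M)"
    by (rule nn_integral_cmult) simp
  also have "\<dots> = ennreal (exp a) * ennreal (1 / 2^(n+1))" by (simp add: erlang_laplace_1[OF TD])
  also have "\<dots> = ennreal ((exp (1/2) / 2)^(n+1))"
  proof -
    have "exp a = exp (1/2) ^ (n+1)" unfolding a_def
      by (subst exp_of_nat_mult[symmetric]) (simp add: field_simps)
    then show ?thesis by (simp add: ennreal_mult[symmetric] power_divide)
  qed
  finally show ?thesis by (simp add: T_def a_def)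
qed

text \<open>By Borel-Cantelli, almost surely T_{n+1} > (n+1)/2 for all large n.\<close>
lemma (in prob_space) partial_sums_eventually_large:
  assumes Zd: "\<And>n. distributed M lborel (Z n) (exponential_density 1)"
    and indZ: "indep_vars (\<lambda>_. borel) Z UNIV"
  shows "AE \<omega> in M. eventually (\<lambda>n. (real n + 1)/2 < (\<Sum>j\<le>n. Z j \<omega>)) sequentially"
proof -
  define A where "A n = {\<omega>\<in>space M. (\<Sum>j\<le>n. Z j \<omega>) \<le> (real n + 1)/2}" for n
  have Zm[measurable]: "Z n \<in> borel_measurable M" for n using distributed_measurable[OF Zd[of n]] by simp
  have Am[measurable]: "A n \<in> sets M" for n unfolding A_def by measurable
  define q where "q = exp (1/2) / (2::real)"
  have q0: "0 \<le> q" by (simp add: q_def)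
  have "exp (1/2::real) ^ 2 = exp 1" by (simp add: exp_of_nat_mult[symmetric])
  also have "\<dots> < 2 ^ 2" using e_less_272 by simp
  finally have "exp (1/2::real) < 2" by (rule power_less_imp_less_base) auto
  then have q1: "q < 1" by (simp add: q_def)
  have mA: "measure M (A n) \<le> q^(n+1)" for n
    using partial_sum_small[OF Zd indZ, of n] q0 by (simp add: A_def q_def emeasure_eq_measure)
  have "summable (\<lambda>n. q^(n+1))" using q0 q1 by (simp add: summable_geometric)
  then have "summable (\<lambda>n. measure M (A n))"
    by (rule summable_comparison_test[rotated]) (use mA in auto)
  then have "AE \<omega> in M. eventually (\<lambda>n. \<omega> \<in> space M - A n) sequentially"
    by (intro borel_cantelli_AE1) (auto simp: emeasure_eq_measure)
  then show ?thesis
    by eventually_elim (auto elim!: eventually_mono simp: A_def not_le)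
qed

lemma nn_integral_powr_unit:
  fixes g :: real assumes "0 < g" "g < 1"
  shows "(\<integral>\<^sup>+x. ennreal (indicator {0..1} x * x powr (-g)) \<partial>lborel) = ennreal (1 / (1 - g))"
proof -
  have "((\<lambda>x::real. x powr (-g)) has_integral (1 / (1 - g))) {0..1}"
    using has_integral_powr_from_0[of "-g" 1] assms by simp
  then have "((\<lambda>x::real. if x \<in> {0..1} then x powr (-g) else 0) has_integral (1 / (1 - g))) UNIV"
    by (simp only: has_integral_restrict_UNIV)
  moreover have "(\<lambda>x::real. if x \<in> {0..1} then x powr (-g) else 0) = (\<lambda>x. indicator {0..1} x * x powr (-g))"
    by (auto simp: indicator_def)
  ultimately have "((\<lambda>x. indicator {0..1} x * x powr (-g)) has_integral (1 / (1 - g))) UNIV" by simp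
  then show ?thesis by (rule nn_integral_has_integral_lborel[rotated 2]) auto
qed

text \<open>The reflected integral, obtained by the substitution x \<mapsto> 1 - x.\<close>
lemma nn_integral_powr_unit_reflected:
  fixes g :: real assumes "0 < g" "g < 1"
  shows "(\<integral>\<^sup>+x. ennreal (indicator {0..1} x * (1 - x) powr (-g)) \<partial>lborel) = ennreal (1 / (1 - g))"
proof -
  have "(\<integral>\<^sup>+x. ennreal (indicator {0..1} x * (1 - x) powr (-g)) \<partial>lborel) =
      ennreal \<bar>-1::real\<bar> * (\<integral>\<^sup>+x. ennreal (indicator {0..1} (1 + -1 * x) * (1 - (1 + -1 * x)) powr (-g)) \<partial>lborel)"
    by (rule nn_integral_real_affine) auto
  also have "(\<lambda>x::real. ennreal (indicator {0..1} (1 + -1 * x) * (1 - (1 + -1 * x)) powr (-g))) =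
      (\<lambda>x. ennreal (indicator {0..1} x * x powr (-g)))"
    by (auto simp: indicator_def)
  finally show ?thesis using nn_integral_powr_unit[OF assms] by simp
qed

text \<open>For uniform Y, E dist_b(Y)^(-g) < \<infinity> when g < 1, since dist_b(x)^(-g) \<le> x^(-g) + (1-x)^(-g).\<close>
lemma nn_integral_boundary_dist_finite:
  fixes g :: real assumes "0 < g" "g < 1"
  shows "(\<integral>\<^sup>+x. ennreal (indicator {0..1} x / measure lborel {0..1::real}) * ennreal (boundary_dist x powr (-g)) \<partial>lborel) < \<infinity>"
proof -
  have "(\<integral>\<^sup>+x. ennreal (indicator {0..1} x / measure lborel {0..1::real}) * ennreal (boundary_dist x powr (-g)) \<partial>lborel)
     \<le> (\<integral>\<^sup>+x. ennreal (indicator {0..1} x * x powr (-g)) + ennreal (indicator {0..1} x * (1 - x) powr (-g)) \<partial>lborel)"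
  proof (rule nn_integral_mono)
    fix x :: real
    have "indicator {0..1} x * boundary_dist x powr (-g)
        \<le> indicator {0..1} x * x powr (-g) + indicator {0..1} x * (1 - x) powr (-g)"
      by (auto simp: indicator_def boundary_dist_def min_def)
    then show "ennreal (indicator {0..1} x / measure lborel {0..1::real}) * ennreal (boundary_dist x powr (-g))
        \<le> ennreal (indicator {0..1} x * x powr (-g)) + ennreal (indicator {0..1} x * (1 - x) powr (-g))"
      by (simp add: ennreal_mult[symmetric] ennreal_plus[symmetric] del: ennreal_plus)
  qed
  also have "\<dots> = ennreal (1 / (1 - g)) + ennreal (1 / (1 - g))"
    by (subst nn_integral_add)
      (auto simp: nn_integral_powr_unit[OF assms] nn_integral_powr_unit_reflected[OF assms])
  also have "\<dots> < \<infinity>" by simp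
  finally show ?thesis .
qed

lemma (in prob_space) uniform_interior:
  fixes X :: "'a \<Rightarrow> real"
  assumes Yd: "distributed M lborel X (\<lambda>x. indicator {0..1} x / measure lborel {0..1::real})"
  shows "AE \<omega> in M. X \<omega> \<in> {0<..<1}"
proof -
  have "AE x in lborel. x \<noteq> (0::real)" "AE x in lborel. x \<noteq> (1::real)" by (rule AE_lborel_singleton)+
  then have "AE x in lborel. 0 < ennreal (indicator {0..1} (x::real) / measure lborel {0..1::real}) \<longrightarrow> x \<in> {0<..<1}"
    by eventually_elim (auto simp: indicator_def)
  then have "AE x in distr M lborel X. x \<in> {0<..<1}"
    unfolding distributed_distr_eq_density[OF Yd] by (subst AE_density) auto
  then show ?thesis by (rule AE_distrD[OF distributed_measurable[OF Yd]])
qed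

text \<open>For summable nonnegative weights a_n, the series sum_n a_n dist_b(Y_n)^(-g) has
  finite expectation and hence converges almost surely (no independence needed).\<close>
lemma (in prob_space) summable_boundary_weighted:
  fixes Y :: "nat \<Rightarrow> 'a \<Rightarrow> real" and a :: "nat \<Rightarrow> real"
  assumes Yd: "\<And>n. distributed M lborel (Y n) (\<lambda>x. indicator {0..1} x / measure lborel {0..1::real})"
    and a0: "\<And>n. 0 \<le> a n" and sa: "summable a" and g: "0 < g" "g < 1"
  shows "AE \<omega> in M. summable (\<lambda>n. a n * boundary_dist (Y n \<omega>) powr (-g))"
proof -
  define K where "K = (\<integral>\<^sup>+x. ennreal (indicator {0..1} x / measure lborel {0..1::real}) * ennreal (boundary_dist x powr (-g)) \<partial>lborel)"
  have K: "K < \<infinity>" unfolding K_def by (rule nn_integral_boundary_dist_finite[OF g])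
  have Ym[measurable]: "Y n \<in> borel_measurable M" for n using distributed_measurable[OF Yd[of n]] by simp
  have term_eq: "(\<integral>\<^sup>+\<omega>. ennreal (a n * boundary_dist (Y n \<omega>) powr (-g)) \<partial>M) = ennreal (a n) * K" for n
  proof -
    have "(\<integral>\<^sup>+\<omega>. ennreal (a n * boundary_dist (Y n \<omega>) powr (-g)) \<partial>M)
        = ennreal (a n) * (\<integral>\<^sup>+\<omega>. ennreal (boundary_dist (Y n \<omega>) powr (-g)) \<partial>M)"
      using a0 by (simp add: ennreal_mult nn_integral_cmult)
    also have "(\<integral>\<^sup>+\<omega>. ennreal (boundary_dist (Y n \<omega>) powr (-g)) \<partial>M) = K"
      unfolding K_def using distributed_nn_integral[OF Yd[of n], of "\<lambda>x. ennreal (boundary_dist x powr (-g))"] by simp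
    finally show ?thesis .
  qed
  have "(\<integral>\<^sup>+\<omega>. (\<Sum>n. ennreal (a n * boundary_dist (Y n \<omega>) powr (-g))) \<partial>M) = (\<Sum>n. ennreal (a n)) * K"
    by (subst nn_integral_suminf) (auto simp: term_eq)
  also have "\<dots> < \<infinity>" using K ennreal_suminf_neq_top[OF sa a0]
    by (simp add: ennreal_mult_less_top less_top)
  finally have "AE \<omega> in M. (\<Sum>n. ennreal (a n * boundary_dist (Y n \<omega>) powr (-g))) \<noteq> \<infinity>"
    by (intro nn_integral_PInf_AE) auto
  then show ?thesis
    by eventually_elim (rule summable_suminf_not_top, use a0 in auto)
qed

theorem theorem4:
  fixes M :: "'a measure" and Z Y :: "nat \<Rightarrow> 'a \<Rightarrow> real" and \<alpha> \<gamma> :: real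
  assumes "prob_space M"
    and "0 < \<alpha>" "\<alpha> < 1" "0 < \<gamma>" "\<gamma> < 1"
    and "\<And>n. distributed M lborel (Z n) (exponential_density 1)"
    and "\<And>n. distributed M lborel (Y n) (\<lambda>x. indicator {0..1} x / measure lborel {0..1::real})"
    and "prob_space.indep_vars M (\<lambda>_. borel) (case_sum Z Y) UNIV"
  shows "AE \<omega> in M. 0 < beta_crit \<alpha> \<gamma> Z Y \<omega>"
proof -
  interpret prob_space M by fact
  define a where "a n = (real n + 1) powr (-1/\<alpha>)" for n
  have "summable (\<lambda>n. real n powr (-1/\<alpha>))"
    using assms(2,3) by (simp add: summable_real_powr_iff field_simps)
  then have "summable (\<lambda>n. real (Suc n) powr (-1/\<alpha>))" by (rule summable_Suc_iff[THEN iffD2])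
  then have sa: "summable a" unfolding a_def by (simp add: add.commute)
  have "AE \<omega> in M. summable (\<lambda>n. a n * boundary_dist (Y n \<omega>) powr (-\<gamma>))"
    using assms(7) _ sa assms(4,5) by (rule summable_boundary_weighted) (simp add: a_def)
  moreover have "AE \<omega> in M. \<forall>n. Y n \<omega> \<in> {0<..<1}"
    unfolding AE_all_countable using uniform_interior[OF assms(7)] by blast
  moreover have "AE \<omega> in M. eventually (\<lambda>n. (real n + 1)/2 < (\<Sum>j\<le>n. Z j \<omega>)) sequentially"
    using assms(6) indep_vars_Inl[OF assms(8)] by (rule partial_sums_eventually_large)
  ultimately show ?thesis
  proof eventually_elim
    case (elim \<omega>)
    have Y01: "\<And>n. Y n \<omega> \<in> {0<..<1}" using elim(2) by blast
    have "summable (\<lambda>n. (\<Sum>j\<le>n. Z j \<omega>) powr (-1/\<alpha>) * boundary_dist (Y n \<omega>) powr (-\<gamma>))"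
      using assms(2) _ elim(3) elim(1)[unfolded a_def] by (rule summable_disorder_weights) simp
    with Y01 show ?case by (rule beta_crit_pos_if_summable[OF assms(4,5)])
  qed
qed

end
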